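(* Let $n\ge m>1$ be integers. Then $$\max\Big\{\sum_{i,j=1}^n t_it_j\,|U^\top U|_{ij}:\ t\in\mathbb{R}^n,\ \|t\|_2=1,\ U\in\mathbb{R}^{m\times n},\ UU^\top=\mathrm{I}_m\Big\}\ \le\ \frac{m}{n}\left(1+\sqrt{\frac{(n-1)(n-m)}{m}}\right),$$ with equality if and only if there exists $U\in\mathbb{R}^{m\times n}$ with $UU^\top=\mathrm{I}_m$, $(U^\top U)_{ii}=m/n$ for all $i\in\{1,\dots,n\}$, and $|U^\top U|_{ij}=\frac1n\sqrt{\frac{(n-m)m}{n-1}}$ for all $i\ne j$.
   Context: $|A|_{ij}$ denotes the absolute value of the $(i,j)$ entry of a matrix $A$. *)

theory Defs
  imports Complex_Main
begin

text \<open>Matrices of varying size are represented as functions nat => nat => real;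
  an m x n matrix U uses the entries U i j with i < m, j < n.\<close>

definition orth_rows :: "nat \<Rightarrow> nat \<Rightarrow> (nat \<Rightarrow> nat \<Rightarrow> real) \<Rightarrow> bool" where
  "orth_rows m n U \<longleftrightarrow>
     (\<forall>i<m. \<forall>k<m. (\<Sum>j<n. U i j * U k j) = (if i = k then 1 else 0))"

definition gram :: "nat \<Rightarrow> (nat \<Rightarrow> nat \<Rightarrow> real) \<Rightarrow> nat \<Rightarrow> nat \<Rightarrow> real" where
  "gram m U i j = (\<Sum>k<m. U k i * U k j)"

definition objective_set :: "nat \<Rightarrow> nat \<Rightarrow> real set" where
  "objective_set m n =
     {(\<Sum>i<n. \<Sum>j<n. t i * t j * \<bar>gram m U i j\<bar>) | t U.
        (\<Sum>i<n. (t i)\<^sup>2) = 1 \<and> orth_rows m n U}"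

end

(*
  Write G = U^T U and F for the objective.  Since U U^T = I, G is an orthogonal projection
  of rank m, so sum_j G_ij^2 = G_ii and tr G = sum_ij G_ij^2 = m.  For any c > 0, summing
  2c t_i t_j |G_ij| = c^2 t_i^2 t_j^2 + G_ij^2 - (c t_i t_j - |G_ij|)^2 over all entries gives
  2c F = c^2 + m - (off-diagonal squares) - sum_i (G_ii - c t_i^2)^2, and the last sum, of
  numbers adding up to m - c, is at least (m - c)^2 / n.  The resulting bound
  F <= (c^2 + m - (m - c)^2 / n) / (2c) is optimised at c^2 = m (n - m) / (n - 1); for m = n
  it tends to 1 as c -> 0.

  At equality all the squares vanish: |G_ij| = c t_i t_j off the diagonal and G_ii - c t_i^2
  is constant.  Inserting this into sum_j G_ij^2 = G_ii shows that every t_i^2 solves one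
  and the same linear equation, so t is uniform, and then G is the Gram matrix of an
  equiangular tight frame.  Conversely, such a frame with uniform t attains the bound.
  Finally the supremum is a maximum: the feasible pairs, truncated to their relevant
  coordinates, form a compact set in the product topology.
*)
theory Submission
  imports Defs "HOL-Analysis.Function_Topology"
begin

lemma gram_diag_nonneg: "gram m U i i \<ge> 0"
  unfolding gram_def by (simp add: sum_nonneg)

lemma sum_gram_diag:
  assumes "orth_rows m n U"
  shows "(\<Sum>i<n. gram m U i i) = real m"
proof -
  have "(\<Sum>i<n. gram m U i i) = (\<Sum>k<m. \<Sum>i<n. U k i * U k i)"
    unfolding gram_def by (rule sum.swap)
  also have "\<dots> = (\<Sum>k<m. 1)"
    using assms unfolding orth_rows_def by (intro sum.cong) auto
  finally show ?thesis by simp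
qed

lemma sum_power2_gram_row:
  assumes "orth_rows m n U"
  shows "(\<Sum>j<n. (gram m U i j)\<^sup>2) = gram m U i i"
proof -
  have "(\<Sum>j<n. (gram m U i j)\<^sup>2) = (\<Sum>j<n. \<Sum>k<m. \<Sum>l<m. U k i * U l i * (U k j * U l j))"
    unfolding gram_def power2_eq_square sum_product by (simp add: mult_ac)
  also have "\<dots> = (\<Sum>k<m. \<Sum>l<m. U k i * U l i * (\<Sum>j<n. U k j * U l j))"
    by (subst sum.swap) (simp add: sum.swap[of _ "{..<n}"] sum_distrib_left)
  also have "\<dots> = (\<Sum>k<m. \<Sum>l<m. U k i * U l i * (if k = l then 1 else 0))"
    using assms unfolding orth_rows_def by (intro sum.cong refl) simp
  also have "\<dots> = (\<Sum>k<m. U k i * U k i)"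
    by (simp add: if_distrib cong: if_cong)
  finally show ?thesis unfolding gram_def .
qed

lemma sum_power2_eq_sum_power2_deviation:
  fixes e :: "'a \<Rightarrow> real"
  assumes "finite A" "A \<noteq> {}"
  defines "\<mu> \<equiv> (\<Sum>i\<in>A. e i) / card A"
  shows "(\<Sum>i\<in>A. (e i)\<^sup>2) = (\<Sum>i\<in>A. (e i - \<mu>)\<^sup>2) + (\<Sum>i\<in>A. e i)\<^sup>2 / card A"
proof -
  have "card A > 0" using assms by (simp add: card_gt_0_iff)
  have "(\<Sum>i\<in>A. (e i - \<mu>)\<^sup>2) = (\<Sum>i\<in>A. (e i)\<^sup>2) - 2 * \<mu> * (\<Sum>i\<in>A. e i) + card A * \<mu>\<^sup>2"
    unfolding power2_diff by (simp add: sum.distrib sum_subtractf sum_distrib_left sum_distrib_right mult_ac)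
  also have "\<dots> = (\<Sum>i\<in>A. (e i)\<^sup>2) - (\<Sum>i\<in>A. e i)\<^sup>2 / card A"
    using \<open>card A > 0\<close> by (simp add: \<mu>_def field_simps power2_eq_square)
  finally show ?thesis by simp
qed

definition objective :: "nat \<Rightarrow> nat \<Rightarrow> (nat \<Rightarrow> real) \<Rightarrow> (nat \<Rightarrow> nat \<Rightarrow> real) \<Rightarrow> real" where
  "objective m n t U = (\<Sum>i<n. \<Sum>j<n. t i * t j * \<bar>gram m U i j\<bar>)"

definition offdiag_defect :: "nat \<Rightarrow> nat \<Rightarrow> real \<Rightarrow> (nat \<Rightarrow> real) \<Rightarrow> (nat \<Rightarrow> nat \<Rightarrow> real) \<Rightarrow> real" where
  "offdiag_defect m n c t U =
     (\<Sum>i<n. \<Sum>j<n. if i = j then 0 else (c * t i * t j - \<bar>gram m U i j\<bar>)\<^sup>2)"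

definition diag_defect :: "nat \<Rightarrow> nat \<Rightarrow> real \<Rightarrow> (nat \<Rightarrow> real) \<Rightarrow> (nat \<Rightarrow> nat \<Rightarrow> real) \<Rightarrow> real" where
  "diag_defect m n c t U = (\<Sum>i<n. (gram m U i i - c * (t i)\<^sup>2 - (real m - c) / real n)\<^sup>2)"

lemma defects_nonneg: "offdiag_defect m n c t U \<ge> 0" "diag_defect m n c t U \<ge> 0"
  unfolding offdiag_defect_def diag_defect_def by (auto intro!: sum_nonneg)

lemma objective_defect_identity:
  assumes orth: "orth_rows m n U" and t1: "(\<Sum>i<n. (t i)\<^sup>2) = 1" and "n > 0"
  shows "2 * c * objective m n t U
           = c\<^sup>2 + real m - (real m - c)\<^sup>2 / real n - offdiag_defect m n c t U - diag_defect m n c t U"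
proof -
  define Q where "Q i j = \<bar>gram m U i j\<bar>" for i j
  define e where "e i = gram m U i i - c * (t i)\<^sup>2" for i
  define s where "s i j = (c * t i * t j - Q i j)\<^sup>2" for i j
  have "2 * c * (t i * t j * Q i j) = c\<^sup>2 * (t i)\<^sup>2 * (t j)\<^sup>2 + (gram m U i j)\<^sup>2 - s i j" for i j
    unfolding s_def Q_def by (simp add: power2_eq_square algebra_simps)
  then have "2 * c * objective m n t U
      = c\<^sup>2 * (\<Sum>i<n. (t i)\<^sup>2) * (\<Sum>j<n. (t j)\<^sup>2) + (\<Sum>i<n. \<Sum>j<n. (gram m U i j)\<^sup>2)
        - (\<Sum>i<n. \<Sum>j<n. s i j)"
    unfolding objective_def Q_def
    by (simp add: sum_distrib_left sum_distrib_right sum_subtractf sum.distrib mult_ac)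
  also have "\<dots> = c\<^sup>2 + real m - (\<Sum>i<n. \<Sum>j<n. s i j)"
    using t1 sum_power2_gram_row[OF orth] sum_gram_diag[OF orth] by simp
  also have "(\<Sum>i<n. \<Sum>j<n. s i j) = offdiag_defect m n c t U + (\<Sum>i<n. (e i)\<^sup>2)"
  proof -
    have "s i j = (if i = j then 0 else s i j) + (if i = j then (e i)\<^sup>2 else 0)" for i j
      unfolding s_def e_def Q_def
      by (cases "i = j") (simp_all add: gram_diag_nonneg power2_eq_square algebra_simps)
    then have "(\<Sum>i<n. \<Sum>j<n. s i j)
        = (\<Sum>i<n. \<Sum>j<n. (if i = j then 0 else s i j) + (if i = j then (e i)\<^sup>2 else 0))"
      by simp
    then show ?thesis
      unfolding offdiag_defect_def s_def Q_def by (simp add: sum.distrib)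
  qed
  also have "(\<Sum>i<n. (e i)\<^sup>2) = diag_defect m n c t U + (real m - c)\<^sup>2 / real n"
  proof -
    have "(\<Sum>i<n. e i) = real m - c"
      unfolding e_def using sum_gram_diag[OF orth] t1
      by (simp add: sum_subtractf sum_distrib_left[symmetric])
    then show ?thesis
      using sum_power2_eq_sum_power2_deviation[of "{..<n}" e] \<open>n > 0\<close>
      unfolding diag_defect_def e_def by auto
  qed
  finally show ?thesis by simp
qed

lemma objective_le_majorant:
  assumes "orth_rows m n U" "(\<Sum>i<n. (t i)\<^sup>2) = 1" "n > 0" "c > 0"
  shows "objective m n t U \<le> (c\<^sup>2 + real m - (real m - c)\<^sup>2 / real n) / (2 * c)"
  using objective_defect_identity[OF assms(1-3), of c] defects_nonneg[of m n c t U] \<open>c > 0\<close>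
  by (simp add: pos_le_divide_eq mult.commute)

definition optimal_c :: "nat \<Rightarrow> nat \<Rightarrow> real" where
  "optimal_c m n = sqrt ((real n - real m) * real m / (real n - 1))"

definition objective_bound :: "nat \<Rightarrow> nat \<Rightarrow> real" where
  "objective_bound m n = real m / real n * (1 + sqrt ((real n - 1) * (real n - real m) / real m))"

lemma optimal_c_nonneg: "m \<le> n \<Longrightarrow> 1 \<le> n \<Longrightarrow> optimal_c m n \<ge> 0"
  unfolding optimal_c_def by (intro real_sqrt_ge_zero divide_nonneg_nonneg mult_nonneg_nonneg) auto

lemma optimal_c_pos: "0 < m \<Longrightarrow> m < n \<Longrightarrow> optimal_c m n > 0"
  unfolding optimal_c_def by simp

lemma power2_optimal_c:
  "m \<le> n \<Longrightarrow> 1 < n \<Longrightarrow> (optimal_c m n)\<^sup>2 = (real n - real m) * real m / (real n - 1)"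
  unfolding optimal_c_def by simp

lemma objective_bound_eq:
  assumes "0 < m" "m \<le> n" "1 < n"
  shows "objective_bound m n = real m / real n + (real n - 1) / real n * optimal_c m n"
proof -
  define c where "c = optimal_c m n"
  have "sqrt ((real n - 1) * (real n - real m) / real m) = c * (real n - 1) / real m"
  proof (rule real_sqrt_unique)
    show "(c * (real n - 1) / real m)\<^sup>2 = (real n - 1) * (real n - real m) / real m"
      unfolding power_divide power_mult_distrib c_def power2_optimal_c[OF assms(2,3)]
      using assms by (simp add: field_simps power2_eq_square)
    show "0 \<le> c * (real n - 1) / real m"
      unfolding c_def using optimal_c_nonneg assms by simp
  qed
  then show ?thesis
    unfolding objective_bound_def c_def[symmetric] using assms by (simp add: field_simps)
qed

lemma majorant_at_optimal_c:
  assumes "1 < m" "m < n"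
  defines "c \<equiv> optimal_c m n"
  shows "(c\<^sup>2 + real m - (real m - c)\<^sup>2 / real n) / (2 * c) = objective_bound m n"
proof -
  have "c > 0" unfolding c_def using assms optimal_c_pos by simp
  have c2: "(real n - 1) * c\<^sup>2 = real m * (real n - real m)"
    unfolding c_def using power2_optimal_c assms by simp
  have "(c\<^sup>2 + real m - (real m - c)\<^sup>2 / real n) / (2 * c)
      = real m / real n + ((real n - 1) * c\<^sup>2 + real m * (real n - real m)) / (2 * c * real n)"
    using \<open>c > 0\<close> assms by (simp add: field_simps power2_eq_square)
  also have "\<dots> = real m / real n + (real n - 1) / real n * c"
    unfolding c2[symmetric] using \<open>c > 0\<close> assms by (simp add: field_simps power2_eq_square)
  also have "\<dots> = objective_bound m n"
    unfolding c_def using objective_bound_eq assms by simp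
  finally show ?thesis .
qed

lemma objective_le_bound:
  assumes "1 < m" "m \<le> n" "orth_rows m n U" "(\<Sum>i<n. (t i)\<^sup>2) = 1"
  shows "objective m n t U \<le> objective_bound m n"
proof (cases "m < n")
  case True
  then show ?thesis
    using objective_le_majorant[OF assms(3,4) _ optimal_c_pos[of m n]] majorant_at_optimal_c[of m n] assms
    by simp
next
  case False
  then have "m = n" using assms by simp
  have "objective m n t U \<le> 1 + e" if "e > 0" for e
  proof -
    have "objective m n t U \<le> (e\<^sup>2 + real n - (real n - e)\<^sup>2 / real n) / (2 * e)"
      using objective_le_majorant[OF assms(3,4) _ that] assms \<open>m = n\<close> by simp
    also have "\<dots> = 1 + e * (real n - 1) / (2 * real n)"
      using that assms by (simp add: field_simps power2_eq_square)
    also have "\<dots> \<le> 1 + e"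
      using that assms by (simp add: field_simps)
    finally show ?thesis .
  qed
  then have "objective m n t U \<le> 1" by (rule field_le_epsilon)
  then show ?thesis using objective_bound_eq[of m n] assms \<open>m = n\<close> by (simp add: optimal_c_def)
qed

lemma offdiag_defect_eq_0_iff:
  "offdiag_defect m n c t U = 0 \<longleftrightarrow> (\<forall>i<n. \<forall>j<n. i \<noteq> j \<longrightarrow> \<bar>gram m U i j\<bar> = c * t i * t j)"
proof -
  have "offdiag_defect m n c t U = 0 \<longleftrightarrow>
      (\<forall>i\<in>{..<n}. \<forall>j\<in>{..<n}. (if i = j then 0 else (c * t i * t j - \<bar>gram m U i j\<bar>)\<^sup>2) = 0)"
    unfolding offdiag_defect_def
    by (intro sum_nonneg_eq_0_iff[THEN trans] ball_cong refl sum_nonneg_eq_0_iff)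
      (auto intro!: sum_nonneg)
  then show ?thesis by auto
qed

lemma diag_defect_eq_0_iff:
  "diag_defect m n c t U = 0 \<longleftrightarrow> (\<forall>i<n. gram m U i i = c * (t i)\<^sup>2 + (real m - c) / real n)"
proof -
  have "diag_defect m n c t U = 0 \<longleftrightarrow>
      (\<forall>i\<in>{..<n}. (gram m U i i - c * (t i)\<^sup>2 - (real m - c) / real n)\<^sup>2 = 0)"
    unfolding diag_defect_def by (intro sum_nonneg_eq_0_iff) auto
  then show ?thesis by (auto simp: diff_eq_eq add.commute)
qed

lemma uniform_weights_if_defects_eq_0:
  assumes orth: "orth_rows m n U" and t1: "(\<Sum>i<n. (t i)\<^sup>2) = 1"
    and "offdiag_defect m n c t U = 0" "diag_defect m n c t U = 0"
    and \<mu>: "(real m - c) / real n \<notin> {0, 1}"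
  shows "\<forall>i<n. (t i)\<^sup>2 = 1 / real n"
proof -
  define \<mu> where "\<mu> = (real m - c) / real n"
  define x where "x i = (t i)\<^sup>2" for i
  define K where "K = c * (2 * \<mu> + c - 1)"
  have "n > 0" using t1 by (rule contrapos_pp) simp
  have off: "\<bar>gram m U i j\<bar> = c * t i * t j" if "i < n" "j < n" "i \<noteq> j" for i j
    using assms(3) that by (simp add: offdiag_defect_eq_0_iff)
  have diag: "gram m U i i = c * x i + \<mu>" if "i < n" for i
    using assms(4) that by (simp add: diag_defect_eq_0_iff x_def \<mu>_def)
  have row: "x i * K = \<mu> - \<mu>\<^sup>2" if i: "i < n" for i
  proof -
    have "(gram m U i j)\<^sup>2 = c\<^sup>2 * x i * x j
        + (if j = i then (gram m U i i)\<^sup>2 - c\<^sup>2 * x i * x i else 0)" if "j < n" for j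
    proof (cases "j = i")
      case False
      then have "(gram m U i j)\<^sup>2 = (c * t i * t j)\<^sup>2"
        using off[OF i that] by (metis power2_abs)
      then show ?thesis using False unfolding x_def by (simp add: power_mult_distrib)
    qed simp
    then have "(\<Sum>j<n. (gram m U i j)\<^sup>2)
        = (\<Sum>j<n. c\<^sup>2 * x i * x j + (if j = i then (gram m U i i)\<^sup>2 - c\<^sup>2 * x i * x i else 0))"
      by (intro sum.cong) auto
    also have "\<dots> = c\<^sup>2 * x i * (\<Sum>j<n. x j) + (gram m U i i)\<^sup>2 - c\<^sup>2 * x i * x i"
      using i by (simp add: sum.distrib sum_distrib_left)
    finally have "(\<Sum>j<n. (gram m U i j)\<^sup>2) = c\<^sup>2 * x i * (\<Sum>j<n. x j) + (gram m U i i)\<^sup>2 - c\<^sup>2 * x i * x i" .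
    then have "c * x i + \<mu> = c\<^sup>2 * x i + (c * x i + \<mu>)\<^sup>2 - c\<^sup>2 * x i * x i"
      using sum_power2_gram_row[OF orth, of i] diag[OF i] t1 unfolding x_def by simp
    then show ?thesis
      unfolding K_def by (simp add: algebra_simps power2_eq_square)
  qed
  have "\<mu> - \<mu>\<^sup>2 \<noteq> 0"
    using \<mu> unfolding \<mu>_def[symmetric] by (simp add: power2_eq_square right_diff_distrib[symmetric])
  then have "K \<noteq> 0" using row[OF \<open>n > 0\<close>] by auto
  then have x_const: "x i = (\<mu> - \<mu>\<^sup>2) / K" if "i < n" for i
    using row[OF that] by (simp add: field_simps)
  have "1 = (\<Sum>i<n. x i)"
    using t1 unfolding x_def by simp
  also have "\<dots> = real n * ((\<mu> - \<mu>\<^sup>2) / K)"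
    using x_const by simp
  finally have "1 = real n * ((\<mu> - \<mu>\<^sup>2) / K)" .
  then have "(\<mu> - \<mu>\<^sup>2) / K = 1 / real n"
    using \<open>n > 0\<close> by (simp add: field_simps)
  then show ?thesis
    using x_const unfolding x_def by (metis lessThan_iff)
qed

definition equiangular_tight_frame :: "nat \<Rightarrow> nat \<Rightarrow> (nat \<Rightarrow> nat \<Rightarrow> real) \<Rightarrow> bool" where
  "equiangular_tight_frame m n U \<longleftrightarrow> orth_rows m n U
     \<and> (\<forall>i<n. gram m U i i = real m / real n)
     \<and> (\<forall>i<n. \<forall>j<n. i \<noteq> j \<longrightarrow>
          \<bar>gram m U i j\<bar> = 1 / real n * sqrt ((real n - real m) * real m / (real n - 1)))"

lemma equiangular_tight_frame_if_objective_eq_bound: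
  assumes "1 < m" "m < n" and orth: "orth_rows m n U" and t1: "(\<Sum>i<n. (t i)\<^sup>2) = 1"
    and eq: "objective m n t U = objective_bound m n"
  shows "equiangular_tight_frame m n U"
proof -
  define c where "c = optimal_c m n"
  have "c > 0" unfolding c_def using assms optimal_c_pos by simp
  have c2: "c\<^sup>2 = (real n - real m) * real m / (real n - 1)"
    unfolding c_def using power2_optimal_c assms by simp
  have "2 * c * objective_bound m n = c\<^sup>2 + real m - (real m - c)\<^sup>2 / real n"
    using majorant_at_optimal_c[OF assms(1,2)] \<open>c > 0\<close> unfolding c_def[symmetric]
    by (simp add: field_simps)
  then have "offdiag_defect m n c t U + diag_defect m n c t U = 0"
    using objective_defect_identity[OF orth t1, of c] eq assms by simp
  then have defects: "offdiag_defect m n c t U = 0" "diag_defect m n c t U = 0"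
    using defects_nonneg[of m n c t U] by linarith+
  have "c \<noteq> real m"
  proof
    assume "c = real m"
    then have "real m * real m * (real n - 1) = (real n - real m) * real m"
      using c2 assms by (simp add: field_simps power2_eq_square)
    then have "real m * real n = real n" using assms by (simp add: algebra_simps)
    then show False using assms by simp
  qed
  moreover have "real m - c < real n" using \<open>c > 0\<close> assms by simp
  ultimately have "(real m - c) / real n \<notin> {0, 1}" using assms by auto
  then have x: "(t i)\<^sup>2 = 1 / real n" if "i < n" for i
    using uniform_weights_if_defects_eq_0[OF orth t1 defects] that by blast
  have diag: "gram m U i i = c * (t i)\<^sup>2 + (real m - c) / real n" if "i < n" for i
    using defects(2) that by (simp add: diag_defect_eq_0_iff)
  have off: "\<bar>gram m U i j\<bar> = c * t i * t j" if "i < n" "j < n" "i \<noteq> j" for i j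
    using defects(1) that by (simp add: offdiag_defect_eq_0_iff)
  have "\<bar>gram m U i j\<bar> = c / real n" if "i < n" "j < n" "i \<noteq> j" for i j
  proof -
    have "(t i * t j)\<^sup>2 = (t i)\<^sup>2 * (t j)\<^sup>2"
      by (rule power_mult_distrib)
    also have "\<dots> = (1 / real n)\<^sup>2"
      using x that by (simp add: power2_eq_square)
    finally have "(t i * t j)\<^sup>2 = (1 / real n)\<^sup>2" .
    moreover have "t i * t j \<ge> 0"
      using off[OF that] \<open>c > 0\<close> by (metis abs_ge_zero mult.assoc zero_le_mult_iff not_le)
    ultimately have "t i * t j = 1 / real n"
      using assms by (simp add: power2_eq_iff_nonneg)
    then show ?thesis using off[OF that] by (simp add: mult.assoc)
  qed
  then show ?thesis
    unfolding equiangular_tight_frame_def c_def optimal_c_def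
    using orth diag x assms by (simp add: field_simps)
qed

lemma objective_uniform_weights:
  assumes "1 < m" "m \<le> n" "equiangular_tight_frame m n U"
  shows "objective m n (\<lambda>_. 1 / sqrt (real n)) U = objective_bound m n"
proof -
  define c where "c = optimal_c m n"
  have row: "(\<Sum>j<n. \<bar>gram m U i j\<bar>) = real m / real n + (real n - 1) * (c / real n)"
    if i: "i < n" for i
  proof -
    have "(\<Sum>j<n. \<bar>gram m U i j\<bar>) = (\<Sum>j<n. c / real n + (if j = i then real m / real n - c / real n else 0))"
      using assms(3) i gram_diag_nonneg[of m U i]
      unfolding equiangular_tight_frame_def c_def optimal_c_def by (intro sum.cong) auto
    also have "\<dots> = real n * (c / real n) + (real m / real n - c / real n)"
      using i by (simp add: sum.distrib)
    finally show ?thesis using i by (simp add: field_simps)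
  qed
  have "objective m n (\<lambda>_. 1 / sqrt (real n)) U = (\<Sum>i<n. 1 / real n * (\<Sum>j<n. \<bar>gram m U i j\<bar>))"
    unfolding objective_def using assms
    by (simp add: sum_distrib_left power2_eq_square[symmetric] mult.assoc[symmetric] power_divide)
  also have "\<dots> = (\<Sum>i<n. 1 / real n * (real m / real n + (real n - 1) * (c / real n)))"
    using row by simp
  also have "\<dots> = real m / real n + (real n - 1) / real n * c"
    using assms by (simp add: field_simps)
  also have "\<dots> = objective_bound m n"
    unfolding c_def using objective_bound_eq assms by simp
  finally show ?thesis .
qed

lemma orth_rows_identity: "m \<le> n \<Longrightarrow> orth_rows m n (\<lambda>i j. of_bool (i = j))"
  unfolding orth_rows_def by auto

lemma equiangular_tight_frame_identity: "equiangular_tight_frame n n (\<lambda>i j. of_bool (i = j))"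
  unfolding equiangular_tight_frame_def gram_def using orth_rows_identity by auto

lemma compact_PiE_UNIV: "(\<And>i. compact (S i)) \<Longrightarrow> compact (Pi\<^sub>E UNIV S)"
  using compactin_PiE[of "\<lambda>i. euclidean" UNIV S] by (simp add: euclidean_product_topology)

lemma continuous_on_fst_coordinate: "continuous_on S (\<lambda>p. fst p i)"
  using continuous_on_product_then_coordinatewise[OF continuous_on_fst[OF continuous_on_id]] .

lemma continuous_on_snd_coordinate: "continuous_on S (\<lambda>p. snd p k j)"
  using continuous_on_product_then_coordinatewise[OF
      continuous_on_product_then_coordinatewise[OF continuous_on_snd[OF continuous_on_id]]] .

definition feasible :: "nat \<Rightarrow> nat \<Rightarrow> ((nat \<Rightarrow> real) \<times> (nat \<Rightarrow> nat \<Rightarrow> real)) set" where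
  "feasible m n = {(t, U). (\<Sum>i<n. (t i)\<^sup>2) = 1 \<and> orth_rows m n U}"

lemma objective_set_eq_image: "objective_set m n = (\<lambda>(t, U). objective m n t U) ` feasible m n"
  unfolding objective_set_def feasible_def objective_def by auto

lemma closed_feasible: "closed (feasible m n)"
proof -
  have "feasible m n = {p. (\<Sum>i<n. (fst p i)\<^sup>2) = 1} \<inter> {p. orth_rows m n (snd p)}"
    unfolding feasible_def by auto
  then show ?thesis
    unfolding orth_rows_def
    by (simp only:) (intro closed_Int closed_Collect_all closed_Collect_imp open_Collect_less
        closed_Collect_eq continuous_intros continuous_on_fst_coordinate continuous_on_snd_coordinate)
qed

lemma continuous_on_objective: "continuous_on S (\<lambda>p. objective m n (fst p) (snd p))"
  unfolding objective_def gram_def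
  by (intro continuous_intros continuous_on_fst_coordinate continuous_on_snd_coordinate)

lemma abs_le_one_if_sum_power2_eq_one:
  fixes f :: "'a \<Rightarrow> real"
  assumes "finite A" "i \<in> A" "(\<Sum>j\<in>A. (f j)\<^sup>2) = 1"
  shows "\<bar>f i\<bar> \<le> 1"
proof -
  have "(f i)\<^sup>2 \<le> (\<Sum>j\<in>A. (f j)\<^sup>2)"
    using assms(1,2) by (intro member_le_sum) auto
  then show ?thesis using assms(3) by (simp add: abs_square_le_1)
qed

lemma feasible_truncation:
  assumes "(t, U) \<in> feasible m n"
  shows "\<exists>t' U'. (t', U') \<in> feasible m n \<and> (\<forall>i. \<bar>t' i\<bar> \<le> 1) \<and> (\<forall>k j. \<bar>U' k j\<bar> \<le> 1)
           \<and> objective m n t' U' = objective m n t U"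
proof (intro exI conjI allI)
  define t' where "t' i = (if i < n then t i else 0)" for i
  define U' where "U' k j = (if k < m \<and> j < n then U k j else 0)" for k j
  have t1: "(\<Sum>i<n. (t i)\<^sup>2) = 1" and orth: "orth_rows m n U"
    using assms unfolding feasible_def by auto
  have "orth_rows m n U'"
    using orth unfolding orth_rows_def U'_def by simp
  moreover have "(\<Sum>i<n. (t' i)\<^sup>2) = 1"
    using t1 unfolding t'_def by simp
  ultimately show "(t', U') \<in> feasible m n"
    unfolding feasible_def by simp
  show "\<bar>t' i\<bar> \<le> 1" for i
    using abs_le_one_if_sum_power2_eq_one[OF _ _ t1, of i] unfolding t'_def by simp
  show "\<bar>U' k j\<bar> \<le> 1" for k j
  proof (cases "k < m \<and> j < n")
    case True
    then have "(\<Sum>j<n. (U k j)\<^sup>2) = 1"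
      using orth unfolding orth_rows_def by (simp add: power2_eq_square)
    then show ?thesis
      using abs_le_one_if_sum_power2_eq_one[of "{..<n}" j] True unfolding U'_def by simp
  qed (auto simp: U'_def)
  have "gram m U' i j = gram m U i j" if "i < n" "j < n" for i j
    using that unfolding gram_def U'_def by simp
  then show "objective m n t' U' = objective m n t U"
    unfolding objective_def t'_def by simp
qed

lemma objective_attains_max:
  assumes "0 < n" "m \<le> n"
  obtains t U where "(t, U) \<in> feasible m n" "\<forall>x\<in>objective_set m n. x \<le> objective m n t U"
proof -
  define B where "B = feasible m n \<inter>
    (Pi\<^sub>E UNIV (\<lambda>_. {-1..1}) \<times> Pi\<^sub>E UNIV (\<lambda>_. Pi\<^sub>E UNIV (\<lambda>_. {-1..1})))"
  have "compact B"
    unfolding B_def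
    by (intro closed_Int_compact closed_feasible compact_Times compact_PiE_UNIV compact_Icc)
  have "(\<Sum>i<n. (if i = 0 then 1 else 0 :: real)\<^sup>2) = 1"
    using assms by (simp add: if_distrib[of "\<lambda>x. x\<^sup>2"] cong: if_cong)
  then have "(\<lambda>i. if i = 0 then 1 else 0, \<lambda>i j. of_bool (i = j)) \<in> B"
    using assms orth_rows_identity unfolding B_def feasible_def by auto
  then obtain p where "p \<in> B"
    and p_max: "\<forall>q\<in>B. objective m n (fst q) (snd q) \<le> objective m n (fst p) (snd p)"
    using continuous_attains_sup[OF \<open>compact B\<close> _ continuous_on_objective] by blast
  show ?thesis
  proof (rule that[of "fst p" "snd p"])
    show "(fst p, snd p) \<in> feasible m n" using \<open>p \<in> B\<close> unfolding B_def by simp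
    show "\<forall>x\<in>objective_set m n. x \<le> objective m n (fst p) (snd p)"
    proof
      fix x assume "x \<in> objective_set m n"
      then obtain t U where "(t, U) \<in> feasible m n" "x = objective m n t U"
        unfolding objective_set_eq_image by auto
      then obtain t' U' where "(t', U') \<in> feasible m n"
          and "\<forall>i. \<bar>t' i\<bar> \<le> 1" "\<forall>k j. \<bar>U' k j\<bar> \<le> 1" "x = objective m n t' U'"
        using feasible_truncation by metis
      then have "(t', U') \<in> B" "x = objective m n t' U'"
        unfolding B_def by (auto simp: PiE_iff abs_le_iff)
      then show "x \<le> objective m n (fst p) (snd p)" using p_max by force
    qed
  qed
qed

theorem proposition3:
  fixes n m :: nat
  assumes "1 < m" and "m \<le> n"
  shows "Sup (objective_set m n)
           \<le> real m / real n * (1 + sqrt ((real n - 1) * (real n - real m) / real m))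
       \<and> (Sup (objective_set m n)
           = real m / real n * (1 + sqrt ((real n - 1) * (real n - real m) / real m))
          \<longleftrightarrow> (\<exists>U. orth_rows m n U
                  \<and> (\<forall>i<n. gram m U i i = real m / real n)
                  \<and> (\<forall>i<n. \<forall>j<n. i \<noteq> j \<longrightarrow>
                       \<bar>gram m U i j\<bar> = 1 / real n * sqrt ((real n - real m) * real m / (real n - 1)))))"
proof -
  have "0 < n" using assms by simp
  then obtain t U where tU: "(t, U) \<in> feasible m n"
    and max: "\<forall>x\<in>objective_set m n. x \<le> objective m n t U"
    using objective_attains_max assms(2) by blast
  then have sup: "Sup (objective_set m n) = objective m n t U"
    by (intro cSup_eq_maximum) (auto simp: objective_set_eq_image)
  have le: "objective m n t U \<le> objective_bound m n"
    using objective_le_bound assms tU unfolding feasible_def by blast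
  have "objective m n t U = objective_bound m n \<longleftrightarrow> (\<exists>U. equiangular_tight_frame m n U)"
  proof
    assume "objective m n t U = objective_bound m n"
    then show "\<exists>U. equiangular_tight_frame m n U"
      using equiangular_tight_frame_if_objective_eq_bound[of m n U t] equiangular_tight_frame_identity[of n]
        assms tU unfolding feasible_def by (cases "m = n") auto
  next
    assume "\<exists>V. equiangular_tight_frame m n V"
    then obtain V where V: "equiangular_tight_frame m n V" ..
    have "((\<lambda>_. 1 / sqrt (real n)), V) \<in> feasible m n"
      using V assms unfolding feasible_def equiangular_tight_frame_def by (simp add: power_divide)
    then have "objective m n (\<lambda>_. 1 / sqrt (real n)) V \<le> objective m n t U"
      using max by (force simp: objective_set_eq_image)
    then show "objective m n t U = objective_bound m n"
      using objective_uniform_weights[OF assms V] le by simp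
  qed
  then show ?thesis
    using sup le unfolding objective_bound_def equiangular_tight_frame_def by simp
qed

end
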